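(* Let $\mathcal{C}$ be a 2-D $(\lambda_1,\lambda_2)$-constacyclic code of area $M\times N$ over $\mathbb{F}_q$ with minimum Hamming distance $d$ and common zero set $V_c=\{(a_1,b_1),\dots,(a_s,b_s)\}$ (all lying in a finite extension field $\mathbb{F}$ of $\mathbb{F}_q$). Let $c\in\mathcal{C}$, and let $e$ be an $M\times N$ array over $\mathbb{F}_q$ whose set of nonzero positions is $\mathbb{E}=\{(i_1,j_1),\dots,(i_t,j_t)\}$ (distinct pairs), with $t\ge1$ and $t\le\lfloor (d-1)/2\rfloor$ (so in particular $t\le\lfloor s/2\rfloor$), and let $r=c+e$ with polynomial $r(x,y)=\sum_{i,j}r_{i,j}x^iy^j$. Then the linear system $AX=B$ in the unknowns $X=(X_1,\dots,X_t)^{T}$, where $A$ is the $s\times t$ matrix with entries $A_{k,l}=a_k^{i_l}b_k^{j_l}$ and $B=(r(a_1,b_1),\dots,r(a_s,b_s))^{T}$, is non-homogeneous and has a unique solution (namely $X_l=e_{i_l,j_l}$).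
   Context: An $M\times N$ array $c=(c_{i,j})$ over $\mathbb{F}_q$ is identified with $c(x,y)=\sum_{i,j}c_{i,j}x^iy^j$. For $\lambda_1,\lambda_2\in\mathbb{F}_q^{\ast}$, a 2-D $(\lambda_1,\lambda_2)$-constacyclic code of area $M\times N$ over $\mathbb{F}_q$ is an $\mathbb{F}_q$-linear subspace of $M\times N$ arrays closed under the column $\lambda_1$-constacyclic shift (row $0$ becomes $\lambda_1$ times row $M-1$, row $i$ becomes row $i-1$) and the row $\lambda_2$-constacyclic shift (column $0$ becomes $\lambda_2$ times column $N-1$, column $j$ becomes column $j-1$); equivalently an ideal of $\mathbb{F}_q[x,y]/\langle x^M-\lambda_1,y^N-\lambda_2\rangle$. Let $V_\circ=\{(a,b): a^M=\lambda_1,\ b^N=\lambda_2\}$ and $V_1$ the set of common roots of all $c(x,y)$, $c\in\mathcal{C}$; the common zero set is $V_c=V_\circ\cap V_1$. The minimum distance is the least Hamming weight (number of nonzero entries) of a nonzero codeword. Throughout, $M,N$ are coprime to the characteristic of $\mathbb{F}_q$. *)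

theory Defs
  imports Main
begin

definition is_array :: "nat \<Rightarrow> nat \<Rightarrow> (nat \<Rightarrow> nat \<Rightarrow> 'a::zero) \<Rightarrow> bool" where
  "is_array M N c \<longleftrightarrow> (\<forall>i j. (M \<le> i \<or> N \<le> j) \<longrightarrow> c i j = 0)"

definition col_shift :: "nat \<Rightarrow> 'a::field \<Rightarrow> (nat \<Rightarrow> nat \<Rightarrow> 'a) \<Rightarrow> (nat \<Rightarrow> nat \<Rightarrow> 'a)" where
  "col_shift M l c = (\<lambda>i j. if i = 0 then l * c (M - 1) j else if i < M then c (i - 1) j else 0)"

definition row_shift :: "nat \<Rightarrow> 'a::field \<Rightarrow> (nat \<Rightarrow> nat \<Rightarrow> 'a) \<Rightarrow> (nat \<Rightarrow> nat \<Rightarrow> 'a)" where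
  "row_shift N l c = (\<lambda>i j. if j = 0 then l * c i (N - 1) else if j < N then c i (j - 1) else 0)"

definition constacyclic_2D ::
  "nat \<Rightarrow> nat \<Rightarrow> 'a::field \<Rightarrow> 'a \<Rightarrow> (nat \<Rightarrow> nat \<Rightarrow> 'a) set \<Rightarrow> bool" where
  "constacyclic_2D M N l1 l2 C \<longleftrightarrow>
     (\<forall>c\<in>C. is_array M N c) \<and> (\<lambda>i j. 0) \<in> C \<and>
     (\<forall>c\<in>C. \<forall>c'\<in>C. (\<lambda>i j. c i j + c' i j) \<in> C) \<and>
     (\<forall>a. \<forall>c\<in>C. (\<lambda>i j. a * c i j) \<in> C) \<and>
     (\<forall>c\<in>C. col_shift M l1 c \<in> C) \<and>
     (\<forall>c\<in>C. row_shift N l2 c \<in> C)"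

definition hweight :: "nat \<Rightarrow> nat \<Rightarrow> (nat \<Rightarrow> nat \<Rightarrow> 'a::zero) \<Rightarrow> nat" where
  "hweight M N c = card {(i, j). i < M \<and> j < N \<and> c i j \<noteq> 0}"

definition is_min_dist :: "nat \<Rightarrow> nat \<Rightarrow> (nat \<Rightarrow> nat \<Rightarrow> 'a::zero) set \<Rightarrow> nat \<Rightarrow> bool" where
  "is_min_dist M N C d \<longleftrightarrow>
     (\<exists>c\<in>C. c \<noteq> (\<lambda>i j. 0) \<and> hweight M N c = d) \<and>
     (\<forall>c\<in>C. c \<noteq> (\<lambda>i j. 0) \<longrightarrow> d \<le> hweight M N c)"

definition field_emb :: "('a::field \<Rightarrow> 'b::field) \<Rightarrow> bool" where
  "field_emb emb \<longleftrightarrow> inj emb \<and> emb 0 = 0 \<and> emb 1 = 1 \<and>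
     (\<forall>x y. emb (x + y) = emb x + emb y) \<and> (\<forall>x y. emb (x * y) = emb x * emb y)"

definition eval2 :: "('a::field \<Rightarrow> 'b::field) \<Rightarrow> nat \<Rightarrow> nat \<Rightarrow> (nat \<Rightarrow> nat \<Rightarrow> 'a) \<Rightarrow> 'b \<Rightarrow> 'b \<Rightarrow> 'b" where
  "eval2 emb M N c a b = (\<Sum>i<M. \<Sum>j<N. emb (c i j) * a ^ i * b ^ j)"

definition V_circ :: "('a::field \<Rightarrow> 'b::field) \<Rightarrow> nat \<Rightarrow> nat \<Rightarrow> 'a \<Rightarrow> 'a \<Rightarrow> ('b \<times> 'b) set" where
  "V_circ emb M N l1 l2 = {(a, b). a ^ M = emb l1 \<and> b ^ N = emb l2}"

definition V_one :: "('a::field \<Rightarrow> 'b::field) \<Rightarrow> nat \<Rightarrow> nat \<Rightarrow> (nat \<Rightarrow> nat \<Rightarrow> 'a) set \<Rightarrow> ('b \<times> 'b) set" where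
  "V_one emb M N C = {(a, b). \<forall>c\<in>C. eval2 emb M N c a b = 0}"

definition V_common :: "('a::field \<Rightarrow> 'b::field) \<Rightarrow> nat \<Rightarrow> nat \<Rightarrow> 'a \<Rightarrow> 'a \<Rightarrow> (nat \<Rightarrow> nat \<Rightarrow> 'a) set \<Rightarrow> ('b \<times> 'b) set" where
  "V_common emb M N l1 l2 C = V_circ emb M N l1 l2 \<inter> V_one emb M N C"

end

(*
  At a common zero (a, b) of the code the codeword c vanishes, so r(a, b) = e(a, b) is the
  left-hand side of the system at X_l = e_{i_l j_l}; this solution is nonzero, hence the system
  is non-homogeneous. For uniqueness, a solution D of the homogeneous system is the evaluation data
  of an array Y over F supported on the error positions, so of weight at most t < d, vanishing
  on V_c. Evaluation on V_o is injective on M x N arrays because |V_o| = MN, and powers of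
  codewords (Fermat in F) combined as E + h - Eh give a codeword E with E = 1 on V_o - V_c;
  hence Y = Y E in F[x,y]/<x^M - l1, y^N - l2>. An F_q-linear functional phi : F -> F_q with
  phi(Y_pq) = 1, applied entrywise, commutes with multiplication by E, so phi(Y) = phi(Y) E is a
  codeword; it is nonzero of weight < d, a contradiction unless Y = 0.
*)
theory Submission
  imports Defs "HOL-Computational_Algebra.Polynomial"
begin

lemma field_emb_simps:
  assumes "field_emb emb"
  shows "emb 0 = 0" "emb 1 = 1" "emb (x + y) = emb x + emb y" "emb (x * y) = emb x * emb y"
    and "emb (x - y) = emb x - emb y" and "emb (sum h K) = (\<Sum>k\<in>K. emb (h k))"
    and "emb x = emb y \<longleftrightarrow> x = y"
proof -
  have add: "emb (u + v) = emb u + emb v" for u v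
    using assms by (simp add: field_emb_def)
  show "emb (x - y) = emb x - emb y"
    by (metis add eq_diff_eq)
  show "emb (sum h K) = (\<Sum>k\<in>K. emb (h k))"
    by (induct K rule: infinite_finite_induct) (use assms in \<open>simp_all add: field_emb_def add\<close>)
qed (use assms in \<open>auto simp: field_emb_def inj_eq\<close>)

lemma exists_linear_functional_eq_1:
  fixes emb :: "'a::field \<Rightarrow> 'b::field"
  assumes "field_emb emb" and "y \<noteq> 0"
  shows "\<exists>\<phi>. Vector_Spaces.linear (\<lambda>a x. emb a * x) (*) \<phi> \<and> \<phi> y = (1::'a)"
proof -
  interpret vector_space_pair "\<lambda>a x. emb a * x" "(*) :: 'a \<Rightarrow> 'a \<Rightarrow> 'a"
    by unfold_locales (simp_all add: field_emb_simps[OF assms(1)] algebra_simps)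
  have "vs1.independent {y}"
    using assms(2) by (simp add: vs1.independent_insert)
  then show ?thesis
    by (intro exI[of _ "construct {y} (\<lambda>_. 1)"]) (simp add: linear_construct construct_basis)
qed

lemma power_card_minus_1_eq_1:
  fixes x :: "'a::{finite,field}"
  assumes "x \<noteq> 0"
  shows "x ^ (card (UNIV :: 'a set) - 1) = 1"
proof -
  have "(\<Prod>y\<in>UNIV-{0}. y) = (\<Prod>y\<in>UNIV-{0::'a}. x * y)"
    by (rule prod.reindex_bij_witness[of _ "\<lambda>y. x * y" "\<lambda>y. y / x"]) (use assms in auto)
  also have "\<dots> = x ^ (card (UNIV :: 'a set) - 1) * (\<Prod>y\<in>UNIV-{0}. y)"
    by (simp add: prod.distrib card_Diff_singleton)
  finally show ?thesis
    by simp
qed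

lemma coeff_eq_0_if_vanishes_on:
  fixes c :: "nat \<Rightarrow> 'a::idom"
  assumes "finite R" and "n \<le> card R" and "\<And>x. x \<in> R \<Longrightarrow> (\<Sum>i<n. c i * x ^ i) = 0"
    and "i < n"
  shows "c i = 0"
proof -
  define p where "p = (\<Sum>i<n. monom (c i) i)"
  have poly_p: "poly p x = (\<Sum>i<n. c i * x ^ i)" for x
    unfolding p_def by (simp add: poly_sum poly_monom)
  have coeff_p: "coeff p k = (if k < n then c k else 0)" for k
    unfolding p_def by (simp add: coeff_sum)
  have "p = 0"
  proof (rule ccontr)
    assume "p \<noteq> 0"
    have "degree p \<le> n - 1"
      by (rule degree_le) (auto simp: coeff_p)
    moreover have "card R \<le> card {x. poly p x = 0}"
      using assms(3) \<open>p \<noteq> 0\<close> by (intro card_mono poly_roots_finite) (auto simp: poly_p)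
    moreover have "card {x. poly p x = 0} \<le> degree p"
      using \<open>p \<noteq> 0\<close> by (rule card_poly_roots_bound)
    ultimately show False
      using assms(2) \<open>i < n\<close> by linarith
  qed
  then show ?thesis
    using coeff_p[of i] \<open>i < n\<close> by simp
qed

lemma coeff2_eq_0_if_vanishes_on_grid:
  fixes f :: "nat \<Rightarrow> nat \<Rightarrow> 'a::idom"
  assumes "finite A" and "M \<le> card A" and "finite B" and "N \<le> card B"
    and vanish: "\<And>a b. a \<in> A \<Longrightarrow> b \<in> B \<Longrightarrow> (\<Sum>i<M. \<Sum>j<N. f i j * a ^ i * b ^ j) = 0"
    and "i < M" and "j < N"
  shows "f i j = 0"
proof -
  have "(\<Sum>j<N. f i j * b ^ j) = 0" if "b \<in> B" for b
  proof (rule coeff_eq_0_if_vanishes_on[OF assms(1,2) _ \<open>i < M\<close>])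
    fix a assume "a \<in> A"
    have "(\<Sum>i<M. (\<Sum>j<N. f i j * b ^ j) * a ^ i) = (\<Sum>i<M. \<Sum>j<N. f i j * a ^ i * b ^ j)"
      by (simp add: sum_distrib_left sum_distrib_right algebra_simps)
    then show "(\<Sum>i<M. (\<Sum>j<N. f i j * b ^ j) * a ^ i) = 0"
      using vanish \<open>a \<in> A\<close> \<open>b \<in> B\<close> by simp
  qed
  then show ?thesis
    by (rule coeff_eq_0_if_vanishes_on[OF assms(3,4) _ \<open>j < N\<close>])
qed

lemma eval2_add:
  assumes "field_emb emb"
  shows "eval2 emb M N (\<lambda>i j. f i j + g i j) a b = eval2 emb M N f a b + eval2 emb M N g a b"
  unfolding eval2_def by (simp add: field_emb_simps[OF assms] sum.distrib algebra_simps)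

lemma eval2_diff:
  assumes "field_emb emb"
  shows "eval2 emb M N (\<lambda>i j. f i j - g i j) a b = eval2 emb M N f a b - eval2 emb M N g a b"
  unfolding eval2_def by (simp add: field_emb_simps[OF assms] sum_subtractf algebra_simps)

lemma eval2_scale:
  assumes "field_emb emb"
  shows "eval2 emb M N (\<lambda>i j. \<alpha> * f i j) a b = emb \<alpha> * eval2 emb M N f a b"
  unfolding eval2_def by (simp add: field_emb_simps[OF assms] sum_distrib_left mult.assoc)

lemma eval2_sum:
  assumes "field_emb emb"
  shows "eval2 emb M N (\<lambda>i j. \<Sum>k\<in>K. h k i j) a b = (\<Sum>k\<in>K. eval2 emb M N (h k) a b)"
  unfolding eval2_def
  by (simp add: field_emb_simps[OF assms] sum_distrib_right sum.swap[of _ K])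

definition mono_mult ::
  "nat \<Rightarrow> nat \<Rightarrow> 'a::field \<Rightarrow> 'a \<Rightarrow> nat \<Rightarrow> nat \<Rightarrow> (nat \<Rightarrow> nat \<Rightarrow> 'a) \<Rightarrow> (nat \<Rightarrow> nat \<Rightarrow> 'a)" where
  "mono_mult M N l1 l2 i j f = (col_shift M l1 ^^ i) ((row_shift N l2 ^^ j) f)"

text \<open>The product of \<open>f\<close> and \<open>g\<close> in \<open>F[x,y]/\<langle>x^M - l1, y^N - l2\<rangle>\<close>, computed by letting
  each monomial of \<open>g\<close> act on \<open>f\<close> by shifts.\<close>
definition cmult ::
  "nat \<Rightarrow> nat \<Rightarrow> 'a::field \<Rightarrow> 'a \<Rightarrow> (nat \<Rightarrow> nat \<Rightarrow> 'a) \<Rightarrow> (nat \<Rightarrow> nat \<Rightarrow> 'a) \<Rightarrow> (nat \<Rightarrow> nat \<Rightarrow> 'a)" where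
  "cmult M N l1 l2 f g = (\<lambda>r s. \<Sum>i<M. \<Sum>j<N. g i j * mono_mult M N l1 l2 i j f r s)"

lemma eval2_col_shift:
  assumes fe: "field_emb emb" and "M \<ge> 1" and "a ^ M = emb l"
  shows "eval2 emb M N (col_shift M l f) a b = a * eval2 emb M N f a b"
proof -
  obtain m where m: "M = Suc m"
    using \<open>M \<ge> 1\<close> by (cases M) auto
  have "(\<Sum>i<M. emb (col_shift M l f i j) * a ^ i * b ^ j) = a * (\<Sum>i<M. emb (f i j) * a ^ i * b ^ j)"
    for j
  proof -
    have "(\<Sum>i<M. emb (col_shift M l f i j) * a ^ i * b ^ j) =
        emb (l * f m j) * b ^ j + (\<Sum>i<m. emb (f i j) * a ^ Suc i * b ^ j)"
      unfolding m by (subst sum.lessThan_Suc_shift) (simp add: col_shift_def)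
    also have "\<dots> = a * (\<Sum>i<M. emb (f i j) * a ^ i * b ^ j)"
      using \<open>a ^ M = emb l\<close> unfolding m
      by (simp add: sum_distrib_left field_emb_simps[OF fe] algebra_simps)
    finally show ?thesis .
  qed
  then show ?thesis
    unfolding eval2_def by (subst (1 2) sum.swap) (simp add: sum_distrib_left)
qed

lemma eval2_row_shift:
  assumes fe: "field_emb emb" and "N \<ge> 1" and "b ^ N = emb l"
  shows "eval2 emb M N (row_shift N l f) a b = b * eval2 emb M N f a b"
proof -
  obtain n where n: "N = Suc n"
    using \<open>N \<ge> 1\<close> by (cases N) auto
  have "(\<Sum>j<N. emb (row_shift N l f i j) * a ^ i * b ^ j) = b * (\<Sum>j<N. emb (f i j) * a ^ i * b ^ j)"
    for i
  proof -
    have "(\<Sum>j<N. emb (row_shift N l f i j) * a ^ i * b ^ j) =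
        emb (l * f i n) * a ^ i + (\<Sum>j<n. emb (f i j) * a ^ i * b ^ Suc j)"
      unfolding n by (subst sum.lessThan_Suc_shift) (simp add: row_shift_def)
    also have "\<dots> = b * (\<Sum>j<N. emb (f i j) * a ^ i * b ^ j)"
      using \<open>b ^ N = emb l\<close> unfolding n
      by (simp add: sum_distrib_left field_emb_simps[OF fe] algebra_simps)
    finally show ?thesis .
  qed
  then show ?thesis
    unfolding eval2_def by (simp add: sum_distrib_left)
qed

lemma eval2_mono_mult:
  assumes fe: "field_emb emb" and M: "M \<ge> 1" and a: "a ^ M = emb l1"
    and N: "N \<ge> 1" and b: "b ^ N = emb l2"
  shows "eval2 emb M N (mono_mult M N l1 l2 i j f) a b = a ^ i * b ^ j * eval2 emb M N f a b"
  unfolding mono_mult_def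
proof (induct i)
  case 0
  show ?case
    by (induct j) (simp_all add: eval2_row_shift[OF fe N b])
next
  case (Suc i)
  then show ?case
    by (simp add: eval2_col_shift[OF fe M a])
qed

lemma eval2_cmult:
  assumes fe: "field_emb emb" and M: "M \<ge> 1" and a: "a ^ M = emb l1"
    and N: "N \<ge> 1" and b: "b ^ N = emb l2"
  shows "eval2 emb M N (cmult M N l1 l2 f g) a b = eval2 emb M N f a b * eval2 emb M N g a b"
  unfolding cmult_def eval2_def[of emb M N g]
  by (simp add: eval2_sum[OF fe] eval2_scale[OF fe] eval2_mono_mult[OF assms]
      sum_distrib_left algebra_simps)

lemma array_mono_mult:
  assumes "is_array M N f"
  shows "is_array M N (mono_mult M N l1 l2 i j f)"
  unfolding mono_mult_def
proof (induct i)
  case 0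
  show ?case
    using assms by (induct j) (auto simp: is_array_def row_shift_def)
next
  case (Suc i)
  then show ?case
    by (auto simp: is_array_def col_shift_def)
qed

lemma array_cmult:
  assumes "is_array M N f"
  shows "is_array M N (cmult M N l1 l2 f g)"
  using array_mono_mult[OF assms] unfolding is_array_def cmult_def by simp

lemma array_eqI_eval2:
  fixes emb :: "'a::field \<Rightarrow> 'b::field"
  assumes fe: "field_emb emb"
    and "finite A" and "M \<le> card A" and "finite B" and "N \<le> card B"
    and f: "is_array M N f" and g: "is_array M N g"
    and eval: "\<And>a b. a \<in> A \<Longrightarrow> b \<in> B \<Longrightarrow> eval2 emb M N f a b = eval2 emb M N g a b"
  shows "f = g"
proof (intro ext)
  fix i j
  show "f i j = g i j"
  proof (cases "i < M \<and> j < N")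
    case True
    have "emb (f i j) - emb (g i j) = 0"
    proof (rule coeff2_eq_0_if_vanishes_on_grid[OF assms(2-5)])
      fix a b assume "a \<in> A" "b \<in> B"
      then have "eval2 emb M N f a b - eval2 emb M N g a b = 0"
        using eval by simp
      then show "(\<Sum>i<M. \<Sum>j<N. (emb (f i j) - emb (g i j)) * a ^ i * b ^ j) = 0"
        unfolding eval2_def by (simp add: sum_subtractf algebra_simps)
    qed (use True in auto)
    then show ?thesis
      by (simp add: field_emb_simps[OF fe])
  next
    case False
    then show ?thesis
      using f g unfolding is_array_def by auto
  qed
qed

lemma cmult_commute:
  fixes emb :: "'a::field \<Rightarrow> 'b::field"
  assumes fe: "field_emb emb" and M: "M \<ge> 1" and N: "N \<ge> 1"
    and card_A: "card {a::'b. a ^ M = emb l1} = M" and card_B: "card {b::'b. b ^ N = emb l2} = N"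
    and f: "is_array M N f" and g: "is_array M N g"
  shows "cmult M N l1 l2 f g = cmult M N l1 l2 g f"
proof (rule array_eqI_eval2[OF fe _ _ _ _ array_cmult[OF f] array_cmult[OF g]])
  show "finite {a::'b. a ^ M = emb l1}" "finite {b::'b. b ^ N = emb l2}"
    using card_A card_B M N by (auto intro: card_ge_0_finite)
qed (simp_all add: card_A card_B eval2_cmult[OF fe M _ N] mult.commute)

lemma constacyclic_2D_array: "constacyclic_2D M N l1 l2 C \<Longrightarrow> f \<in> C \<Longrightarrow> is_array M N f"
  and constacyclic_2D_zero: "constacyclic_2D M N l1 l2 C \<Longrightarrow> (\<lambda>i j. 0) \<in> C"
  and constacyclic_2D_add:
    "constacyclic_2D M N l1 l2 C \<Longrightarrow> f \<in> C \<Longrightarrow> g \<in> C \<Longrightarrow> (\<lambda>i j. f i j + g i j) \<in> C"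
  and constacyclic_2D_scale: "constacyclic_2D M N l1 l2 C \<Longrightarrow> f \<in> C \<Longrightarrow> (\<lambda>i j. \<alpha> * f i j) \<in> C"
  and constacyclic_2D_col_shift: "constacyclic_2D M N l1 l2 C \<Longrightarrow> f \<in> C \<Longrightarrow> col_shift M l1 f \<in> C"
  and constacyclic_2D_row_shift: "constacyclic_2D M N l1 l2 C \<Longrightarrow> f \<in> C \<Longrightarrow> row_shift N l2 f \<in> C"
  unfolding constacyclic_2D_def by blast+

lemma constacyclic_2D_diff:
  assumes C: "constacyclic_2D M N l1 l2 C" and "f \<in> C" and "g \<in> C"
  shows "(\<lambda>i j. f i j - g i j) \<in> C"
  using constacyclic_2D_add[OF C \<open>f \<in> C\<close> constacyclic_2D_scale[OF C \<open>g \<in> C\<close>, of "- 1"]]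
  by simp

lemma constacyclic_2D_sum:
  assumes C: "constacyclic_2D M N l1 l2 C" and "\<And>k. k \<in> K \<Longrightarrow> h k \<in> C"
  shows "(\<lambda>i j. \<Sum>k\<in>K. h k i j) \<in> C"
  using assms(2)
proof (induct K rule: infinite_finite_induct)
  case (insert k K)
  then show ?case
    using constacyclic_2D_add[OF C, of "h k" "\<lambda>i j. \<Sum>k\<in>K. h k i j"] by simp
qed (simp_all add: constacyclic_2D_zero[OF C])

lemma constacyclic_2D_mono_mult:
  assumes C: "constacyclic_2D M N l1 l2 C" and "f \<in> C"
  shows "mono_mult M N l1 l2 i j f \<in> C"
  unfolding mono_mult_def
proof (induct i)
  case 0
  show ?case
    using \<open>f \<in> C\<close> by (induct j) (simp_all add: constacyclic_2D_row_shift[OF C])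
next
  case (Suc i)
  then show ?case
    by (simp add: constacyclic_2D_col_shift[OF C])
qed

lemma constacyclic_2D_cmult:
  assumes C: "constacyclic_2D M N l1 l2 C" and "f \<in> C"
  shows "cmult M N l1 l2 f g \<in> C"
  unfolding cmult_def
  by (intro constacyclic_2D_sum[OF C] constacyclic_2D_scale[OF C]
      constacyclic_2D_mono_mult[OF C \<open>f \<in> C\<close>])

lemma constacyclic_2D_eval2_eq_1:
  fixes emb :: "'a::field \<Rightarrow> 'b::{finite,field}"
  assumes fe: "field_emb emb" and M: "M \<ge> 1" and N: "N \<ge> 1"
    and C: "constacyclic_2D M N l1 l2 C"
    and P: "(a, b) \<in> V_circ emb M N l1 l2 - V_common emb M N l1 l2 C"
  shows "\<exists>h\<in>C. eval2 emb M N h a b = 1"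
proof -
  have a: "a ^ M = emb l1" and b: "b ^ N = emb l2"
    using P by (auto simp: V_circ_def)
  obtain g where "g \<in> C" and g_ne_0: "eval2 emb M N g a b \<noteq> 0"
    using P by (auto simp: V_common_def V_circ_def V_one_def)
  define pow where "pow k = ((\<lambda>f. cmult M N l1 l2 f g) ^^ k) g" for k
  have pow_C: "pow k \<in> C" for k
    unfolding pow_def by (induct k) (simp_all add: \<open>g \<in> C\<close> constacyclic_2D_cmult[OF C])
  have eval_pow: "eval2 emb M N (pow k) a b = eval2 emb M N g a b ^ Suc k" for k
    unfolding pow_def by (induct k) (simp_all add: eval2_cmult[OF fe M a N b])
  have "card {0, 1::'b} \<le> card (UNIV :: 'b set)"
    by (rule card_mono) simp_all
  then have "Suc (card (UNIV :: 'b set) - 2) = card (UNIV :: 'b set) - 1"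
    by simp
  then have "eval2 emb M N (pow (card (UNIV :: 'b set) - 2)) a b = 1"
    using power_card_minus_1_eq_1[OF g_ne_0] by (simp only: eval_pow)
  then show ?thesis
    using pow_C by blast
qed

lemma constacyclic_2D_eval2_eq_1_off_common_zeros:
  fixes emb :: "'a::field \<Rightarrow> 'b::{finite,field}"
  assumes fe: "field_emb emb" and M: "M \<ge> 1" and N: "N \<ge> 1"
    and C: "constacyclic_2D M N l1 l2 C"
  shows "\<exists>E\<in>C. \<forall>(a, b)\<in>V_circ emb M N l1 l2 - V_common emb M N l1 l2 C. eval2 emb M N E a b = 1"
proof -
  let ?V = "V_circ emb M N l1 l2 - V_common emb M N l1 l2 C"
  have "finite ?V" "?V \<subseteq> ?V"
    by simp_all
  then show ?thesis
  proof (induct rule: finite_subset_induct')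
    case empty
    then show ?case
      using constacyclic_2D_zero[OF C] by blast
  next
    case (insert P T)
    then obtain E where "E \<in> C" and E_1: "\<forall>(a, b)\<in>T. eval2 emb M N E a b = 1"
      by blast
    obtain h where "h \<in> C" and h_1: "eval2 emb M N h (fst P) (snd P) = 1"
      using constacyclic_2D_eval2_eq_1[OF fe M N C, of "fst P" "snd P"] \<open>P \<in> ?V\<close> by auto
    define E' where "E' = (\<lambda>i j. E i j + h i j - cmult M N l1 l2 E h i j)"
    have "E' \<in> C"
      unfolding E'_def
      by (intro constacyclic_2D_diff[OF C] constacyclic_2D_add[OF C] constacyclic_2D_cmult[OF C]
          \<open>E \<in> C\<close> \<open>h \<in> C\<close>)
    moreover have "eval2 emb M N E' a b = 1" if "(a, b) \<in> insert P T" for a b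
    proof -
      have a: "a ^ M = emb l1" and b: "b ^ N = emb l2"
        using that insert.hyps(2,3) by (auto simp: V_circ_def)
      have "eval2 emb M N E' a b =
          eval2 emb M N E a b + eval2 emb M N h a b - eval2 emb M N E a b * eval2 emb M N h a b"
        unfolding E'_def by (simp add: eval2_diff[OF fe] eval2_add[OF fe] eval2_cmult[OF fe M a N b])
      then show ?thesis
        using that E_1 h_1 by auto
    qed
    ultimately show ?case
      by blast
  qed
qed

lemma linear_mono_mult:
  assumes lin: "Vector_Spaces.linear (\<lambda>a x. emb a * x) (*) \<phi>"
  shows "(\<lambda>r s. \<phi> (mono_mult M N (emb l1) (emb l2) i j W r s))
       = mono_mult M N l1 l2 i j (\<lambda>r s. \<phi> (W r s))"
proof -
  interpret \<phi>: Vector_Spaces.linear "\<lambda>a x. emb a * x" "(*)" \<phi>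
    by (fact lin)
  show ?thesis
    unfolding mono_mult_def
  proof (induct i)
    case 0
    show ?case
      by (induct j) (simp_all add: row_shift_def fun_eq_iff \<phi>.scale)
  next
    case (Suc i)
    then show ?case
      by (simp add: col_shift_def fun_eq_iff \<phi>.scale)
  qed
qed

lemma linear_cmult:
  assumes lin: "Vector_Spaces.linear (\<lambda>a x. emb a * x) (*) \<phi>"
  shows "(\<lambda>r s. \<phi> (cmult M N (emb l1) (emb l2) W (\<lambda>i j. emb (E i j)) r s))
       = cmult M N l1 l2 (\<lambda>r s. \<phi> (W r s)) E"
proof -
  interpret \<phi>: Vector_Spaces.linear "\<lambda>a x. emb a * x" "(*)" \<phi>
    by (fact lin)
  show ?thesis
    unfolding cmult_def by (simp add: \<phi>.sum \<phi>.scale linear_mono_mult[OF lin, symmetric])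
qed

lemma hweight_map_le:
  assumes "\<phi> 0 = 0"
  shows "hweight M N (\<lambda>i j. \<phi> (Y i j)) \<le> hweight M N Y"
  unfolding hweight_def
proof (rule card_mono)
  show "finite {(i, j). i < M \<and> j < N \<and> Y i j \<noteq> 0}"
    by (rule finite_subset[of _ "{..<M} \<times> {..<N}"]) auto
qed (use assms in auto)

lemma array_eq_0_if_vanishes_on_common_zeros:
  fixes emb :: "'a::field \<Rightarrow> 'b::{finite,field}" and Y :: "nat \<Rightarrow> nat \<Rightarrow> 'b"
  assumes fe: "field_emb emb" and M: "M \<ge> 1" and N: "N \<ge> 1"
    and card_A: "card {a::'b. a ^ M = emb l1} = M" and card_B: "card {b::'b. b ^ N = emb l2} = N"
    and C: "constacyclic_2D M N l1 l2 C" and d: "is_min_dist M N C d"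
    and Y: "is_array M N Y"
    and vanish: "\<And>a b. (a, b) \<in> V_common emb M N l1 l2 C \<Longrightarrow> eval2 id M N Y a b = 0"
    and weight: "hweight M N Y < d"
  shows "Y = (\<lambda>i j. 0)"
proof (rule ccontr)
  assume "Y \<noteq> (\<lambda>i j. 0)"
  then obtain p q where "Y p q \<noteq> 0"
    by (auto simp: fun_eq_iff)
  obtain E where "E \<in> C"
    and E_1: "\<And>a b. (a, b) \<in> V_circ emb M N l1 l2 - V_common emb M N l1 l2 C \<Longrightarrow>
      eval2 emb M N E a b = 1"
    using constacyclic_2D_eval2_eq_1_off_common_zeros[OF fe M N C] by blast
  have id: "field_emb (id :: 'b \<Rightarrow> 'b)"
    by (simp add: field_emb_def)
  have fixed: "cmult M N (emb l1) (emb l2) Y (\<lambda>i j. emb (E i j)) = Y"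
  proof (rule array_eqI_eval2[OF id _ _ _ _ array_cmult[OF Y] Y])
    show "finite {a::'b. a ^ M = emb l1}" "finite {b::'b. b ^ N = emb l2}"
      by simp_all
    fix a b assume a: "a \<in> {a. a ^ M = emb l1}" and b: "b \<in> {b. b ^ N = emb l2}"
    have "eval2 id M N (\<lambda>i j. emb (E i j)) a b = eval2 emb M N E a b"
      by (simp add: eval2_def)
    moreover have "eval2 id M N Y a b * eval2 emb M N E a b = eval2 id M N Y a b"
      using vanish[of a b] E_1[of a b] a b by (cases "(a, b) \<in> V_common emb M N l1 l2 C") (auto simp: V_circ_def)
    ultimately show "eval2 id M N (cmult M N (emb l1) (emb l2) Y (\<lambda>i j. emb (E i j))) a b
        = eval2 id M N Y a b"
      using a b by (simp add: eval2_cmult[OF id M _ N])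
  qed (simp_all add: card_A card_B)
  obtain \<phi> where lin: "Vector_Spaces.linear (\<lambda>a x. emb a * x) (*) \<phi>" and "\<phi> (Y p q) = 1"
    using exists_linear_functional_eq_1[OF fe \<open>Y p q \<noteq> 0\<close>] by blast
  interpret \<phi>: Vector_Spaces.linear "\<lambda>a x. emb a * x" "(*)" \<phi>
    by (fact lin)
  define y where "y = (\<lambda>i j. \<phi> (Y i j))"
  have "is_array M N y"
    using Y unfolding y_def is_array_def by simp
  have "y = cmult M N l1 l2 y E"
    using linear_cmult[OF lin, of M N l1 l2 Y E] unfolding fixed y_def .
  also have "\<dots> = cmult M N l1 l2 E y"
    using cmult_commute[OF fe M N card_A card_B \<open>is_array M N y\<close>]
      constacyclic_2D_array[OF C \<open>E \<in> C\<close>] .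
  finally have "y \<in> C"
    using constacyclic_2D_cmult[OF C \<open>E \<in> C\<close>, of y] by metis
  moreover have "y \<noteq> (\<lambda>i j. 0)"
    using \<open>\<phi> (Y p q) = 1\<close> unfolding y_def by (metis one_neq_zero)
  ultimately have "d \<le> hweight M N y"
    using d unfolding is_min_dist_def by blast
  moreover have "hweight M N y \<le> hweight M N Y"
    unfolding y_def by (rule hweight_map_le) (fact \<phi>.zero)
  ultimately show False
    using weight by linarith
qed

lemma eval2_supported:
  assumes fe: "field_emb emb" and inj: "inj_on (\<lambda>l. (ei l, ej l)) {..<t}"
    and range: "(\<lambda>l. (ei l, ej l)) ` {..<t} \<subseteq> {..<M} \<times> {..<N}"
    and supp: "{(i, j). i < M \<and> j < N \<and> W i j \<noteq> 0} \<subseteq> (\<lambda>l. (ei l, ej l)) ` {..<t}"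
  shows "eval2 emb M N W a b = (\<Sum>l<t. a ^ ei l * b ^ ej l * emb (W (ei l) (ej l)))"
proof -
  let ?T = "(\<lambda>l. (ei l, ej l)) ` {..<t}"
  have "eval2 emb M N W a b = (\<Sum>(i, j)\<in>{..<M} \<times> {..<N}. emb (W i j) * a ^ i * b ^ j)"
    unfolding eval2_def by (simp add: sum.cartesian_product)
  also have "\<dots> = (\<Sum>(i, j)\<in>?T. emb (W i j) * a ^ i * b ^ j)"
    using supp by (intro sum.mono_neutral_right range) (auto simp: field_emb_simps[OF fe])
  also have "\<dots> = (\<Sum>l<t. a ^ ei l * b ^ ej l * emb (W (ei l) (ej l)))"
    by (simp add: sum.reindex[OF inj] mult_ac)
  finally show ?thesis .
qed

lemma eval2_received_at_common_zero:
  assumes fe: "field_emb emb" and "c \<in> C" and "(a, b) \<in> V_common emb M N l1 l2 C"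
    and inj: "inj_on (\<lambda>l. (ei l, ej l)) {..<t}"
    and range: "(\<lambda>l. (ei l, ej l)) ` {..<t} \<subseteq> {..<M} \<times> {..<N}"
    and supp: "{(i, j). i < M \<and> j < N \<and> e i j \<noteq> 0} \<subseteq> (\<lambda>l. (ei l, ej l)) ` {..<t}"
  shows "eval2 emb M N (\<lambda>i j. c i j + e i j) a b = (\<Sum>l<t. a ^ ei l * b ^ ej l * emb (e (ei l) (ej l)))"
proof -
  have "eval2 emb M N c a b = 0"
    using assms(2,3) by (auto simp: V_common_def V_one_def)
  then show ?thesis
    by (simp add: eval2_add[OF fe] eval2_supported[OF fe inj range supp])
qed

lemma error_system_homogeneous_solution_eq_0:
  fixes emb :: "'a::field \<Rightarrow> 'b::{finite,field}" and D :: "nat \<Rightarrow> 'b"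
  assumes fe: "field_emb emb" and M: "M \<ge> 1" and N: "N \<ge> 1"
    and card_A: "card {a::'b. a ^ M = emb l1} = M" and card_B: "card {b::'b. b ^ N = emb l2} = N"
    and C: "constacyclic_2D M N l1 l2 C" and d: "is_min_dist M N C d"
    and zeros: "V_common emb M N l1 l2 C \<subseteq> {(av k, bv k) | k. k < s}"
    and inj: "inj_on (\<lambda>l. (ei l, ej l)) {..<t}"
    and range: "(\<lambda>l. (ei l, ej l)) ` {..<t} \<subseteq> {..<M} \<times> {..<N}"
    and "t < d"
    and solution: "\<And>k. k < s \<Longrightarrow> (\<Sum>l<t. av k ^ ei l * bv k ^ ej l * D l) = 0"
    and "l < t"
  shows "D l = 0"
proof -
  define Y where "Y i j = (\<Sum>l<t. if (ei l, ej l) = (i, j) then D l else 0)" for i j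
  have Y_at: "Y (ei l) (ej l) = D l" if "l < t" for l
  proof -
    have "Y (ei l) (ej l) = (\<Sum>l'<t. if l' = l then D l' else 0)"
      unfolding Y_def using inj that by (intro sum.cong refl) (auto simp: inj_on_def)
    then show ?thesis
      using that by simp
  qed
  have supp: "{(i, j). i < M \<and> j < N \<and> Y i j \<noteq> 0} \<subseteq> (\<lambda>l. (ei l, ej l)) ` {..<t}"
  proof clarify
    fix i j assume "Y i j \<noteq> 0"
    then obtain l where "l < t" and "(if (ei l, ej l) = (i, j) then D l else 0) \<noteq> 0"
      unfolding Y_def by (rule sum.not_neutral_contains_not_neutral) simp
    then show "(i, j) \<in> (\<lambda>l. (ei l, ej l)) ` {..<t}"
      by (auto split: if_splits)
  qed
  have "is_array M N Y"
    unfolding is_array_def Y_def using range by (auto intro!: sum.neutral)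
  moreover have "eval2 id M N Y a b = 0" if ab: "(a, b) \<in> V_common emb M N l1 l2 C" for a b
  proof -
    obtain k where "k < s" and "a = av k" "b = bv k"
      using zeros ab by blast
    then show ?thesis
      using eval2_supported[of id, OF _ inj range supp] solution[OF \<open>k < s\<close>]
      by (simp add: field_emb_def Y_at)
  qed
  moreover have "hweight M N Y < d"
  proof -
    have "hweight M N Y \<le> card ((\<lambda>l. (ei l, ej l)) ` {..<t})"
      unfolding hweight_def using supp by (intro card_mono) auto
    also have "\<dots> \<le> t"
      using card_image_le[of "{..<t}"] by simp
    finally show ?thesis
      using \<open>t < d\<close> by linarith
  qed
  ultimately have "Y = (\<lambda>i j. 0)"
    by (rule array_eq_0_if_vanishes_on_common_zeros[OF fe M N card_A card_B C d])
  then show ?thesis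
    using Y_at[OF \<open>l < t\<close>] by simp
qed

theorem mainTheorem9:
  fixes emb :: "'a::{finite,field} \<Rightarrow> 'b::{finite,field}"
    and M N :: nat and l1 l2 :: 'a
    and C :: "(nat \<Rightarrow> nat \<Rightarrow> 'a) set" and d :: nat
    and s :: nat and av bv :: "nat \<Rightarrow> 'b"
    and c e :: "nat \<Rightarrow> nat \<Rightarrow> 'a"
    and t :: nat and ei ej :: "nat \<Rightarrow> nat"
  assumes "field_emb emb"
    and "M \<ge> 1" and "N \<ge> 1"
    and "of_nat M \<noteq> (0::'a)" and "of_nat N \<noteq> (0::'a)"
    and "l1 \<noteq> 0" and "l2 \<noteq> 0"
    and "card {a::'b. a ^ M = emb l1} = M" and "card {b::'b. b ^ N = emb l2} = N"
    and "constacyclic_2D M N l1 l2 C"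
    and "is_min_dist M N C d"
    and "V_common emb M N l1 l2 C = {(av k, bv k) | k. k < s}"
    and "inj_on (\<lambda>k. (av k, bv k)) {..<s}"
    and "c \<in> C"
    and "is_array M N e"
    and "{(i, j). i < M \<and> j < N \<and> e i j \<noteq> 0} = {(ei l, ej l) | l. l < t}"
    and "inj_on (\<lambda>l. (ei l, ej l)) {..<t}"
    and "t \<ge> 1" and "t \<le> (d - 1) div 2"
  shows "(\<exists>k<s. eval2 emb M N (\<lambda>i j. c i j + e i j) (av k) (bv k) \<noteq> 0) \<and>
         (\<forall>X :: nat \<Rightarrow> 'b.
            (\<forall>k<s. (\<Sum>l<t. (av k) ^ (ei l) * (bv k) ^ (ej l) * X l)
                    = eval2 emb M N (\<lambda>i j. c i j + e i j) (av k) (bv k))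
            \<longleftrightarrow> (\<forall>l<t. X l = emb (e (ei l) (ej l))))"
proof -
  note fe = assms(1) and zeros = assms(12) and inj = assms(17)
  have positions: "(\<lambda>l. (ei l, ej l)) ` {..<t} = {(i, j). i < M \<and> j < N \<and> e i j \<noteq> 0}"
    using assms(16) by auto
  have range: "(\<lambda>l. (ei l, ej l)) ` {..<t} \<subseteq> {..<M} \<times> {..<N}"
    unfolding positions by auto
  let ?r = "\<lambda>k. eval2 emb M N (\<lambda>i j. c i j + e i j) (av k) (bv k)"
  let ?e = "\<lambda>l. emb (e (ei l) (ej l))"
  have syndrome: "?r k = (\<Sum>l<t. av k ^ ei l * bv k ^ ej l * ?e l)" if "k < s" for k
    using eval2_received_at_common_zero[OF fe \<open>c \<in> C\<close> _ inj range] positions zeros \<open>k < s\<close>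
    by blast
  have solutions: "(\<forall>k<s. (\<Sum>l<t. av k ^ ei l * bv k ^ ej l * X l) = ?r k) \<longleftrightarrow> (\<forall>l<t. X l = ?e l)"
    for X
  proof
    assume "\<forall>k<s. (\<Sum>l<t. av k ^ ei l * bv k ^ ej l * X l) = ?r k"
    then have "\<forall>k<s. (\<Sum>l<t. av k ^ ei l * bv k ^ ej l * (X l - ?e l)) = 0"
      by (simp add: syndrome algebra_simps sum_subtractf)
    moreover have "t < d"
      using assms(18,19) by linarith
    ultimately show "\<forall>l<t. X l = ?e l"
      using error_system_homogeneous_solution_eq_0[OF fe assms(2,3,8-11) equalityD1[OF zeros] inj range,
          of "\<lambda>l. X l - ?e l"]
      by simp
  qed (simp add: syndrome)
  have "?e 0 \<noteq> 0"
    using positions assms(18) by (auto simp: field_emb_simps[OF fe, symmetric])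
  then have "\<exists>k<s. ?r k \<noteq> 0"
    using solutions[of "\<lambda>_. 0"] assms(18) by auto
  with solutions show ?thesis
    by blast
qed

end
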